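(* Let $r_1<\dots<r_N$ be distinct points of $I$ and let $\mathcal Q_N=\{x\in\mathbb R^N:x_i\ge0,\ \sum_ix_i=1\}$. Let $\sigma:\mathcal P\to\mathrm{HS}(G,H^* )$ be Lipschitz, i.e. there is $K>0$ with $\|\sigma(\mu)-\sigma(\nu)\|_{\mathrm{HS}}\le K\|\mu-\nu\|_{H^*}$ for all $\mu,\nu\in\mathcal P$, and suppose there is a function $g:\mathcal P\times I\to G$ with $\sigma(\mu)(dr)=g(\mu,r)\mu(dr)$ for all $\mu\in\mathcal P$ (i.e. $\sigma(\mu)h$ is the signed measure $\langle g(\mu,r),h\rangle_G\mu(dr)$ for $h\in G$). For $x\in\mathcal Q_N$ define $\sigma_i(x)=g\big(\sum_jx_j\delta_{r_j},r_i\big)x_i\in G$, so that $\sigma\big(\sum_ix_i\delta_{r_i}\big)=\sum_i\sigma_i(x)\delta_{r_i}$. Then the functions $\sigma_i:\mathcal Q_N\to G$ are Lipschitz.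
   Context: Let $a,b\ge0$ and $I=[-a,b]$. $H$ is the space of absolutely continuous $\varphi:I\to\mathbb R$ with $\|\varphi\|_H^2=\varphi(0)^2+\int_I\varphi'(r)^2dr<\infty$; $H^*$ is the completion of the finite signed Borel measures on $I$ under $\|\mu\|_{H^*}=\sup\{\int\varphi\,d\mu:\varphi\in H,\|\varphi\|_H=1\}$ (the dual of $H$); $\mathcal P\subset H^*$ is the set of Borel probability measures on $I$; $\delta_r$ is the Dirac mass at $r$. $G$ is a real separable Hilbert space and $\mathrm{HS}(G,H^* )$ the Hilbert–Schmidt operators $G\to H^*$ with norm $\|A\|_{\mathrm{HS}}^2=\sum_n\|Ae_n\|^2_{H^*}$ for an orthonormal basis $(e_n)$ of $G$. For $z_1,\dots,z_N\in G$, $\sum_iz_i\delta_{r_i}$ denotes the operator $h\mapsto\sum_i\langle z_i,h\rangle_G\delta_{r_i}$ in $\mathrm{HS}(G,H^* )$. *)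

theory Defs
  imports "HOL-Probability.Probability"
begin

abbreviation Ival :: "real \<Rightarrow> real \<Rightarrow> real set" where
  "Ival a b \<equiv> {-a..b}"

text \<open>Unit sphere of H: absolutely continuous phi on I (written as
  phi r = phi 0 + integral from 0 to r of its a.e. derivative psi, psi in L2(I))
  with phi(0)^2 + int_I psi^2 = 1.\<close>
definition H_unit :: "real \<Rightarrow> real \<Rightarrow> (real \<Rightarrow> real) set" where
  "H_unit a b = {\<phi>. \<exists>\<psi>. set_borel_measurable lborel (Ival a b) \<psi>
      \<and> set_integrable lborel (Ival a b) (\<lambda>s. (\<psi> s)\<^sup>2)
      \<and> (\<forall>r\<in>Ival a b. \<phi> r = \<phi> 0 + (LBINT s=0..r. \<psi> s))
      \<and> (\<phi> 0)\<^sup>2 + (LINT s:Ival a b|lborel. (\<psi> s)\<^sup>2) = 1}"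

definition dual_norm :: "real \<Rightarrow> real \<Rightarrow> ((real \<Rightarrow> real) \<Rightarrow> real) \<Rightarrow> real" where
  "dual_norm a b L = Sup {L \<phi> | \<phi>. \<phi> \<in> H_unit a b}"

definition prob_measures :: "real \<Rightarrow> real \<Rightarrow> real measure set" where
  "prob_measures a b = {M. prob_space M \<and> sets M = sets (restrict_space borel (Ival a b))}"

definition sigma_fun :: "(real measure \<Rightarrow> real \<Rightarrow> 'g::real_inner) \<Rightarrow> real measure \<Rightarrow> 'g
    \<Rightarrow> (real \<Rightarrow> real) \<Rightarrow> real" where
  "sigma_fun g M h = (\<lambda>\<phi>. LINT r|M. \<phi> r * (g M r \<bullet> h))"

definition HS_dist :: "real \<Rightarrow> real \<Rightarrow> 'g::real_inner set \<Rightarrow> (real measure \<Rightarrow> real \<Rightarrow> 'g)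
    \<Rightarrow> real measure \<Rightarrow> real measure \<Rightarrow> real" where
  "HS_dist a b B g M N = sqrt (\<Sum>\<^sub>\<infinity>e\<in>B.
      (dual_norm a b (\<lambda>\<phi>. sigma_fun g M e \<phi> - sigma_fun g N e \<phi>))\<^sup>2)"

definition meas_dist :: "real \<Rightarrow> real \<Rightarrow> real measure \<Rightarrow> real measure \<Rightarrow> real" where
  "meas_dist a b M N = dual_norm a b (\<lambda>\<phi>. (LINT r|M. \<phi> r) - (LINT r|N. \<phi> r))"

definition dirac_comb :: "real \<Rightarrow> real \<Rightarrow> ('n::finite \<Rightarrow> real) \<Rightarrow> real^'n \<Rightarrow> real measure" where
  "dirac_comb a b r x = measure_of (Ival a b) (sets (restrict_space borel (Ival a b)))
      (\<lambda>A. \<Sum>j\<in>UNIV. ennreal (x $ j) * indicator A (r j))"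

definition simplex_Q :: "(real^'n::finite) set" where
  "simplex_Q = {x. (\<forall>i. 0 \<le> x $ i) \<and> (\<Sum>i\<in>UNIV. x $ i) = 1}"

end

theory Submission
  imports Defs "HOL-Computational_Algebra.Polynomial"
begin

text \<open>Fix \<open>i\<close> and write \<open>\<mu>\<^sub>x = \<Sum>\<^sub>j x\<^sub>j \<delta>\<^bsub>r\<^sub>j\<^esub>\<close>. Take a unit vector \<open>\<phi>\<close> of \<open>H\<close> vanishing at every
  \<open>r\<^sub>j\<close> with \<open>j \<noteq> i\<close> but not at \<open>r\<^sub>i\<close> (a normalised polynomial). Evaluated at \<open>\<phi>\<close>, the
  functional \<open>(\<sigma>(\<mu>\<^sub>x) - \<sigma>(\<mu>\<^sub>y)) e\<close> equals \<open>\<langle>\<phi>(r\<^sub>i) (\<sigma>\<^sub>i(x) - \<sigma>\<^sub>i(y)), e\<rangle>\<close>, so by Parseval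
  \<open>|\<phi>(r\<^sub>i)| \<parallel>\<sigma>\<^sub>i(x) - \<sigma>\<^sub>i(y)\<parallel>\<close> is bounded by the Hilbert--Schmidt distance of \<open>\<sigma>(\<mu>\<^sub>x)\<close> and
  \<open>\<sigma>(\<mu>\<^sub>y)\<close>, hence by \<open>K \<parallel>\<mu>\<^sub>x - \<mu>\<^sub>y\<parallel>\<^sub>H\<^sub>*\<close>. Finally the unit ball of \<open>H\<close> is uniformly bounded
  on \<open>I\<close> (by \<open>(a + b + 3) / 2\<close>), which bounds \<open>\<parallel>\<mu>\<^sub>x - \<mu>\<^sub>y\<parallel>\<^sub>H\<^sub>*\<close> by a multiple of
  \<open>\<Sum>\<^sub>j |x\<^sub>j - y\<^sub>j|\<close>.\<close>

lemma sigma_sets_restrict_borel: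
  "sigma_sets (Ival a b) (sets (restrict_space borel (Ival a b))) = sets (restrict_space borel (Ival a b))"
  using sets.sigma_sets_eq[of "restrict_space borel (Ival a b)"] by (simp add: space_restrict_space)

lemma sets_dirac_comb:
  "sets (dirac_comb a b r x) = sets (restrict_space borel (Ival a b))"
  unfolding dirac_comb_def
  using sets.space_closed[of "restrict_space borel (Ival a b)"]
  by (simp add: space_restrict_space sigma_sets_restrict_borel)

lemma measurable_points_Ival:
  "(\<And>j. r j \<in> Ival a b) \<Longrightarrow> r \<in> count_space UNIV \<rightarrow>\<^sub>M restrict_space borel (Ival a b)"
  by (auto simp: measurable_def space_restrict_space)

lemma emeasure_distr_density_count_space_finite:
  fixes w :: "'n::finite \<Rightarrow> ennreal"
  assumes r: "r \<in> count_space UNIV \<rightarrow>\<^sub>M N" and A: "A \<in> sets N"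
  shows "emeasure (distr (density (count_space UNIV) w) N r) A = (\<Sum>j\<in>UNIV. w j * indicator A (r j))"
proof -
  have "emeasure (distr (density (count_space UNIV) w) N r) A =
      (\<integral>\<^sup>+ j. w j * indicator (r -` A) j \<partial>count_space UNIV)"
    using r A by (simp add: emeasure_distr emeasure_density)
  then show ?thesis
    by (simp add: nn_integral_count_space_finite indicator_def)
qed

lemma dirac_comb_eq_distr:
  assumes r_in: "\<And>j. r j \<in> Ival a b"
  shows "dirac_comb a b r x =
    distr (density (count_space UNIV) (\<lambda>j. ennreal (x $ j))) (restrict_space borel (Ival a b)) r"
    (is "_ = ?D")
proof -
  have "?D = measure_of (space ?D) (sets ?D) (emeasure ?D)"
    by (rule measure_of_of_measure[symmetric])
  also have "\<dots> = measure_of (Ival a b) (sets (restrict_space borel (Ival a b))) (emeasure ?D)"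
    by (simp add: space_restrict_space)
  also have "\<dots> = dirac_comb a b r x"
    unfolding dirac_comb_def
    using sets.space_closed[of "restrict_space borel (Ival a b)"]
    by (intro measure_of_eq)
      (auto simp: space_restrict_space sigma_sets_restrict_borel
        emeasure_distr_density_count_space_finite[OF measurable_points_Ival[where r=r, OF r_in]])
  finally show ?thesis by simp
qed

lemma dirac_comb_in_prob_measures:
  assumes r_in: "\<And>j. r j \<in> Ival a b" and x: "x \<in> simplex_Q"
  shows "dirac_comb a b r x \<in> prob_measures a b"
proof -
  have "Ival a b \<in> sets (restrict_space borel (Ival a b))"
    using sets.top[of "restrict_space borel (Ival a b)"] by (simp add: space_restrict_space)
  then have "emeasure (dirac_comb a b r x) (Ival a b) = (\<Sum>j\<in>UNIV. ennreal (x $ j))"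
    using r_in by (simp add: dirac_comb_eq_distr measurable_points_Ival
        emeasure_distr_density_count_space_finite)
  also have "\<dots> = 1"
    using x by (simp add: simplex_Q_def sum_ennreal)
  finally show ?thesis
    using r_in by (auto simp: prob_measures_def sets_dirac_comb dirac_comb_eq_distr
        space_restrict_space intro!: prob_spaceI)
qed

lemma integral_dirac_comb:
  assumes r_in: "\<And>j. r j \<in> Ival a b" and x_nonneg: "\<And>j. 0 \<le> x $ j"
    and f: "f \<in> borel_measurable (restrict_space borel (Ival a b))"
  shows "(LINT t|dirac_comb a b r x. f t) = (\<Sum>j\<in>UNIV. x $ j * f (r j))"
proof -
  have "(LINT t|dirac_comb a b r x. f t) =
      (LINT j|density (count_space UNIV) (\<lambda>j. ennreal (x $ j)). f (r j))"
    unfolding dirac_comb_eq_distr[OF r_in]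
    using measurable_points_Ival[where r=r, OF r_in] f by (simp add: integral_distr)
  also have "\<dots> = (LINT j|count_space UNIV. x $ j *\<^sub>R f (r j))"
    by (rule integral_density) (auto simp: x_nonneg)
  finally show ?thesis
    by (simp add: lebesgue_integral_count_space_finite)
qed

lemma integral_dirac_comb_nonmeasurable:
  assumes "f \<notin> borel_measurable (restrict_space borel (Ival a b))"
  shows "(LINT t|dirac_comb a b r x. f t) = 0"
proof (rule not_integrable_integral_eq)
  show "\<not> integrable (dirac_comb a b r x) f"
    using assms borel_measurable_integrable[of "dirac_comb a b r x" f]
    by (auto simp: measurable_cong_sets[OF sets_dirac_comb refl])
qed

lemma abs_integral_dirac_comb_le:
  assumes r_in: "\<And>j. r j \<in> Ival a b" and x_nonneg: "\<And>j. 0 \<le> x $ j"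
  shows "\<bar>LINT t|dirac_comb a b r x. f t\<bar> \<le> (\<Sum>j\<in>UNIV. x $ j * \<bar>f (r j)\<bar>)"
proof (cases "f \<in> borel_measurable (restrict_space borel (Ival a b))")
  case True
  have "\<bar>\<Sum>j\<in>UNIV. x $ j * f (r j)\<bar> \<le> (\<Sum>j\<in>UNIV. x $ j * \<bar>f (r j)\<bar>)"
    using sum_abs[of "\<lambda>j. x $ j * f (r j)" UNIV] by (simp add: abs_mult x_nonneg)
  then show ?thesis
    using integral_dirac_comb[where r=r, OF r_in x_nonneg True] by simp
qed (simp add: integral_dirac_comb_nonmeasurable sum_nonneg x_nonneg)

lemma integral_dirac_comb_diff_le:
  assumes r_in: "\<And>j. r j \<in> Ival a b"
    and x_nonneg: "\<And>j. 0 \<le> x $ j" and y_nonneg: "\<And>j. 0 \<le> y $ j"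
    and f_bound: "\<And>j. \<bar>f (r j)\<bar> \<le> C"
  shows "(LINT t|dirac_comb a b r x. f t) - (LINT t|dirac_comb a b r y. f t)
    \<le> C * (\<Sum>j\<in>UNIV. \<bar>x $ j - y $ j\<bar>)"
proof (cases "f \<in> borel_measurable (restrict_space borel (Ival a b))")
  case True
  have "(LINT t|dirac_comb a b r x. f t) - (LINT t|dirac_comb a b r y. f t)
      = (\<Sum>j\<in>UNIV. (x $ j - y $ j) * f (r j))"
    using integral_dirac_comb[where r=r, OF r_in x_nonneg True]
      integral_dirac_comb[where r=r, OF r_in y_nonneg True]
    by (simp add: sum_subtractf[symmetric] left_diff_distrib)
  also have "\<dots> \<le> (\<Sum>j\<in>UNIV. \<bar>x $ j - y $ j\<bar> * C)"
  proof (rule sum_mono)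
    fix j
    have "(x $ j - y $ j) * f (r j) \<le> \<bar>x $ j - y $ j\<bar> * \<bar>f (r j)\<bar>"
      by (metis abs_ge_self abs_mult)
    also have "\<dots> \<le> \<bar>x $ j - y $ j\<bar> * C"
      by (simp add: f_bound mult_left_mono)
    finally show "(x $ j - y $ j) * f (r j) \<le> \<bar>x $ j - y $ j\<bar> * C" .
  qed
  finally show ?thesis
    by (simp add: sum_distrib_left mult.commute)
next
  case False
  have "0 \<le> C" using f_bound[of undefined] by simp
  with False show ?thesis
    by (simp add: integral_dirac_comb_nonmeasurable sum_nonneg)
qed

lemma H_unit_uminus:
  assumes "\<phi> \<in> H_unit a b"
  shows "(\<lambda>t. - \<phi> t) \<in> H_unit a b"
proof -
  obtain \<psi> where \<psi>_meas: "set_borel_measurable lborel (Ival a b) \<psi>"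
      and \<psi>_sq: "set_integrable lborel (Ival a b) (\<lambda>s. (\<psi> s)\<^sup>2)"
      and \<phi>_eq: "\<forall>r\<in>Ival a b. \<phi> r = \<phi> 0 + (LBINT s=0..r. \<psi> s)"
      and norm_eq: "(\<phi> 0)\<^sup>2 + (LINT s:Ival a b|lborel. (\<psi> s)\<^sup>2) = 1"
    using assms unfolding H_unit_def by blast
  show ?thesis
    unfolding H_unit_def
    using \<psi>_meas \<psi>_sq \<phi>_eq norm_eq
    by (intro CollectI exI[of _ "\<lambda>s. - \<psi> s"])
      (simp add: set_borel_measurable_def interval_lebesgue_integral_uminus)
qed

lemma abs_set_integral_le_square_integral:
  fixes \<psi> :: "real \<Rightarrow> real"
  assumes \<psi>_sq: "set_integrable lborel (Ival a b) (\<lambda>s. (\<psi> s)\<^sup>2)"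
    and "0 \<le> a" "0 \<le> b" and A: "A \<subseteq> Ival a b" and e: "0 < e"
  shows "\<bar>LINT s:A|lborel. \<psi> s\<bar> \<le> (e * (a + b) + (LINT s:Ival a b|lborel. (\<psi> s)\<^sup>2) / e) / 2"
proof -
  let ?I = "Ival a b"
  define h where "h s = (e / 2) * indicator ?I s + indicator ?I s * (\<psi> s)\<^sup>2 / (2 * e)" for s
  have I_int: "integrable lborel (indicator ?I :: real \<Rightarrow> real)"
    using assms by (simp add: integrable_indicator_iff)
  have sq_int: "integrable lborel (\<lambda>s. indicator ?I s * (\<psi> s)\<^sup>2)"
    using \<psi>_sq by (simp add: set_integrable_def)
  have "\<bar>LINT s:A|lborel. \<psi> s\<bar> \<le> (LINT s|lborel. norm (indicator A s * \<psi> s))"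
    using integral_norm_bound[of lborel "\<lambda>s. indicator A s * \<psi> s"]
    by (simp add: set_lebesgue_integral_def)
  also have "\<dots> \<le> (LINT s|lborel. h s)"
  proof (rule integral_mono')
    show "integrable lborel h"
      unfolding h_def using I_int sq_int by auto
    fix s :: real
    have "0 \<le> (\<bar>\<psi> s\<bar> - e)\<^sup>2" by simp
    then have "\<bar>\<psi> s\<bar> \<le> e / 2 + (\<psi> s)\<^sup>2 / (2 * e)"
      using e by (simp add: field_simps power2_eq_square)
    then show "norm (indicator A s * \<psi> s) \<le> h s"
      using A e by (auto simp: h_def indicator_def)
    show "0 \<le> h s"
      using e by (auto simp: h_def indicator_def)
  qed
  also have "(LINT s|lborel. h s) = (e / 2) * (a + b) + (LINT s:?I|lborel. (\<psi> s)\<^sup>2) / (2 * e)"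
    unfolding h_def using I_int sq_int assms by (simp add: set_lebesgue_integral_def)
  finally show ?thesis
    using e by (simp add: field_simps)
qed

lemma abs_interval_integral_le_square_integral:
  fixes \<psi> :: "real \<Rightarrow> real"
  assumes \<psi>_sq: "set_integrable lborel (Ival a b) (\<lambda>s. (\<psi> s)\<^sup>2)"
    and ab: "0 \<le> a" "0 \<le> b" and t: "t \<in> Ival a b" and e: "0 < e"
  shows "\<bar>LBINT s=0..t. \<psi> s\<bar> \<le> (e * (a + b) + (LINT s:Ival a b|lborel. (\<psi> s)\<^sup>2) / e) / 2"
proof (cases "0 \<le> t")
  case True
  then have "(LBINT s=0..t. \<psi> s) = (LINT s:{0<..<t}|lborel. \<psi> s)"
    by (simp add: interval_lebesgue_integral_def zero_ereal_def)
  moreover have "{0<..<t} \<subseteq> Ival a b" using t ab by auto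
  ultimately show ?thesis
    using abs_set_integral_le_square_integral[OF \<psi>_sq ab _ e] by auto
next
  case False
  then have "(LBINT s=0..t. \<psi> s) = - (LINT s:{t<..<0}|lborel. \<psi> s)"
    by (simp add: interval_lebesgue_integral_def zero_ereal_def)
  moreover have "{t<..<0} \<subseteq> Ival a b" using t ab by auto
  ultimately show ?thesis
    using abs_set_integral_le_square_integral[OF \<psi>_sq ab _ e] by auto
qed

lemma H_unit_abs_le:
  assumes \<phi>: "\<phi> \<in> H_unit a b" and ab: "0 \<le> a" "0 \<le> b" and t: "t \<in> Ival a b"
  shows "\<bar>\<phi> t\<bar> \<le> (a + b + 3) / 2"
proof -
  obtain \<psi> where \<psi>_sq: "set_integrable lborel (Ival a b) (\<lambda>s. (\<psi> s)\<^sup>2)"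
      and \<phi>_eq: "\<forall>r\<in>Ival a b. \<phi> r = \<phi> 0 + (LBINT s=0..r. \<psi> s)"
      and norm_eq: "(\<phi> 0)\<^sup>2 + (LINT s:Ival a b|lborel. (\<psi> s)\<^sup>2) = 1"
    using \<phi> unfolding H_unit_def by blast
  have "0 \<le> (LINT s:Ival a b|lborel. (\<psi> s)\<^sup>2)"
    unfolding set_lebesgue_integral_def by (intro integral_nonneg_AE) (auto simp: indicator_def)
  then have "(\<phi> 0)\<^sup>2 \<le> 1" and energy_le: "(LINT s:Ival a b|lborel. (\<psi> s)\<^sup>2) \<le> 1"
    using norm_eq zero_le_power2[of "\<phi> 0"] by linarith+
  then have "\<bar>\<phi> 0\<bar> \<le> 1"
    by (simp add: abs_square_le_1)
  moreover have "\<bar>LBINT s=0..t. \<psi> s\<bar> \<le> (a + b + 1) / 2"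
    using abs_interval_integral_le_square_integral[OF \<psi>_sq ab t, of 1] energy_le by simp
  moreover have "\<bar>\<phi> t\<bar> \<le> \<bar>\<phi> 0\<bar> + \<bar>LBINT s=0..t. \<psi> s\<bar>"
    using \<phi>_eq t abs_triangle_ineq by fastforce
  ultimately show ?thesis
    by (simp add: field_simps)
qed

lemma interval_integral_poly_pderiv:
  fixes p :: "real poly"
  shows "(LBINT s=0..t. poly (pderiv p) s) = poly p t - poly p 0"
proof -
  have "(LBINT s=ereal 0..ereal t. poly (pderiv p) s) = poly p t - poly p 0"
    by (intro interval_integral_FTC_finite continuous_intros)
      (metis has_field_derivative_at_within has_real_derivative_iff_has_vector_derivative poly_DERIV)
  then show ?thesis
    by (simp add: zero_ereal_def)
qed

lemma set_integrable_poly_square: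
  fixes p :: "real poly"
  shows "set_integrable lborel (Ival a b) (\<lambda>s. (poly p s)\<^sup>2)"
  by (intro borel_integrable_atLeastAtMost' continuous_intros)

lemma poly_div_in_H_unit:
  fixes p :: "real poly"
  assumes c_sq: "c\<^sup>2 = (poly p 0)\<^sup>2 + (LINT s:Ival a b|lborel. (poly (pderiv p) s)\<^sup>2)"
    and c: "c \<noteq> 0"
  shows "(\<lambda>t. poly p t / c) \<in> H_unit a b"
  unfolding H_unit_def
proof (intro CollectI exI[of _ "\<lambda>s. poly (pderiv p) s / c"] conjI ballI)
  have "(\<lambda>s. poly (pderiv p) s / c) \<in> borel_measurable borel"
    using c by (intro borel_measurable_continuous_onI continuous_intros) auto
  then show "set_borel_measurable lborel (Ival a b) (\<lambda>s. poly (pderiv p) s / c)"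
    unfolding set_borel_measurable_def by measurable
  show "set_integrable lborel (Ival a b) (\<lambda>s. (poly (pderiv p) s / c)\<^sup>2)"
    using c by (intro borel_integrable_atLeastAtMost' continuous_intros) auto
  show "poly p t / c = poly p 0 / c + (LBINT s=0..t. poly (pderiv p) s / c)" for t
    using interval_integral_poly_pderiv[of t p] c by (simp add: field_simps)
  have "(LINT s:Ival a b|lborel. (poly (pderiv p) s / c)\<^sup>2)
      = (LINT s:Ival a b|lborel. (poly (pderiv p) s)\<^sup>2) / c\<^sup>2"
    by (simp add: power_divide)
  then show "(poly p 0 / c)\<^sup>2 + (LINT s:Ival a b|lborel. (poly (pderiv p) s / c)\<^sup>2) = 1"
    using c by (simp add: power_divide add_divide_distrib[symmetric] c_sq[symmetric])
qed

lemma poly_H_energy_pos: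
  fixes p :: "real poly"
  assumes ab: "0 \<le> a" "0 \<le> b" and t: "t \<in> Ival a b" and nonzero: "poly p t \<noteq> 0"
  shows "0 < (poly p 0)\<^sup>2 + (LINT s:Ival a b|lborel. (poly (pderiv p) s)\<^sup>2)"
proof (rule ccontr)
  let ?S = "LINT s:Ival a b|lborel. (poly (pderiv p) s)\<^sup>2"
  have "0 \<le> ?S"
    unfolding set_lebesgue_integral_def by (intro integral_nonneg_AE) (auto simp: indicator_def)
  moreover assume "\<not> 0 < (poly p 0)\<^sup>2 + ?S"
  ultimately have p0: "poly p 0 = 0" and S: "?S = 0"
    by (smt (verit) zero_le_power2 zero_eq_power2)+
  have "\<bar>poly p t\<bar> \<le> 0 + \<epsilon>" if "0 < \<epsilon>" for \<epsilon>
  proof -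
    have "\<bar>poly p t\<bar> \<le> (\<epsilon> / (a + b + 1)) * (a + b) / 2"
      using abs_interval_integral_le_square_integral[OF set_integrable_poly_square ab t,
          of "\<epsilon> / (a + b + 1)" "pderiv p"] that ab S p0
      by (simp add: interval_integral_poly_pderiv)
    also have "\<dots> \<le> \<epsilon>"
      using that ab by (simp add: field_simps)
    finally show ?thesis by simp
  qed
  then have "\<bar>poly p t\<bar> \<le> 0"
    by (rule field_le_epsilon)
  with nonzero show False by simp
qed

lemma H_unit_test_function:
  fixes r :: "'n::finite \<Rightarrow> real"
  assumes ab: "0 \<le> a" "0 \<le> b" and r_inj: "inj r" and r_in: "\<And>j. r j \<in> Ival a b"
  obtains \<phi> where "\<phi> \<in> H_unit a b" "continuous_on UNIV \<phi>"
    "\<phi> (r i) \<noteq> 0" "\<And>j. j \<noteq> i \<Longrightarrow> \<phi> (r j) = 0"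
proof -
  define p :: "real poly" where "p = (\<Prod>j\<in>UNIV-{i}. [:- r j, 1:])"
  have poly_p: "poly p t = (\<Prod>j\<in>UNIV-{i}. t - r j)" for t
    by (simp add: p_def poly_prod)
  have p_ri: "poly p (r i) \<noteq> 0"
    using r_inj by (auto simp: poly_p inj_eq)
  define c where "c = sqrt ((poly p 0)\<^sup>2 + (LINT s:Ival a b|lborel. (poly (pderiv p) s)\<^sup>2))"
  have energy_pos: "0 < (poly p 0)\<^sup>2 + (LINT s:Ival a b|lborel. (poly (pderiv p) s)\<^sup>2)"
    by (rule poly_H_energy_pos[OF ab r_in p_ri])
  then have c: "0 < c"
    by (simp add: c_def)
  show ?thesis
  proof
    show "(\<lambda>t. poly p t / c) \<in> H_unit a b"
      using c energy_pos by (intro poly_div_in_H_unit) (auto simp: c_def)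
    show "continuous_on UNIV (\<lambda>t. poly p t / c)"
      using c by (intro continuous_intros) auto
    show "poly p (r i) / c \<noteq> 0"
      using p_ri c by simp
    show "poly p (r j) / c = 0" if "j \<noteq> i" for j
      using that by (auto simp: poly_p prod_zero_iff)
  qed
qed

lemma H_unit_const_one: "(\<lambda>_. 1) \<in> H_unit a b"
  unfolding H_unit_def
  by (intro CollectI exI[of _ "\<lambda>_. 0"]) (simp add: set_borel_measurable_def set_integrable_def)

lemma dual_norm_upper:
  assumes "bounded (L ` H_unit a b)" and "\<phi> \<in> H_unit a b"
  shows "L \<phi> \<le> dual_norm a b L"
  unfolding dual_norm_def
  using assms bounded_imp_bdd_above by (intro cSup_upper) (auto simp: setcompr_eq_image)

lemma dual_norm_least:
  assumes "\<And>\<phi>. \<phi> \<in> H_unit a b \<Longrightarrow> L \<phi> \<le> M"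
  shows "dual_norm a b L \<le> M"
  unfolding dual_norm_def using assms H_unit_const_one by (intro cSup_least) auto

lemma abs_le_dual_norm:
  assumes bdd: "bounded (L ` H_unit a b)" and odd: "\<And>\<phi>. L (\<lambda>t. - \<phi> t) = - L \<phi>"
    and \<phi>: "\<phi> \<in> H_unit a b"
  shows "\<bar>L \<phi>\<bar> \<le> dual_norm a b L"
  using dual_norm_upper[OF bdd \<phi>] dual_norm_upper[OF bdd H_unit_uminus[OF \<phi>]] odd[of \<phi>]
  by linarith

lemma dual_norm_nonneg:
  assumes "bounded (L ` H_unit a b)" and "\<And>\<phi>. L (\<lambda>t. - \<phi> t) = - L \<phi>"
  shows "0 \<le> dual_norm a b L"
  using abs_le_dual_norm[OF assms H_unit_const_one] by linarith

lemma dual_norm_diff_le: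
  assumes bdd1: "bounded (L1 ` H_unit a b)" and bdd2: "bounded (L2 ` H_unit a b)"
    and odd2: "\<And>\<phi>. L2 (\<lambda>t. - \<phi> t) = - L2 \<phi>"
  shows "dual_norm a b (\<lambda>\<phi>. L1 \<phi> - L2 \<phi>) \<le> dual_norm a b L1 + dual_norm a b L2"
proof (rule dual_norm_least)
  fix \<phi> assume "\<phi> \<in> H_unit a b"
  then show "L1 \<phi> - L2 \<phi> \<le> dual_norm a b L1 + dual_norm a b L2"
    using abs_le_dual_norm[OF bdd2 odd2] dual_norm_upper[OF bdd1] by fastforce
qed

lemma inner_sum_orthonormal:
  fixes B :: "'g::real_inner set"
  assumes B_norm: "\<And>e. e \<in> B \<Longrightarrow> norm e = 1" and B_orth: "pairwise orthogonal B"
    and F: "finite F" "F \<subseteq> B" and e': "e' \<in> F"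
  shows "e' \<bullet> (\<Sum>e\<in>F. f e *\<^sub>R e) = f e'"
proof -
  have "f e * (e' \<bullet> e) = (if e = e' then f e else 0)" if "e \<in> F" for e
  proof (cases "e = e'")
    case True
    then show ?thesis
      using B_norm[of e] that F by (simp add: norm_eq_1 subset_iff)
  next
    case False
    then show ?thesis
      using B_orth that e' F by (auto simp: orthogonal_def pairwise_def subset_iff)
  qed
  then have "e' \<bullet> (\<Sum>e\<in>F. f e *\<^sub>R e) = (\<Sum>e\<in>F. if e = e' then f e else 0)"
    by (simp add: inner_sum_right)
  also have "\<dots> = f e'"
    using F e' by (simp add: sum.delta')
  finally show ?thesis .
qed

lemma power2_norm_approx_finite_Fourier_sum:
  fixes B :: "'g::real_inner set" and d :: 'g
  assumes B_norm: "\<And>e. e \<in> B \<Longrightarrow> norm e = 1" and B_orth: "pairwise orthogonal B"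
    and B_dense: "closure (span B) = UNIV" and \<epsilon>: "0 < \<epsilon>"
  obtains F where "finite F" "F \<subseteq> B" "(norm d)\<^sup>2 \<le> (\<Sum>e\<in>F. (d \<bullet> e)\<^sup>2) + \<epsilon>"
proof -
  obtain v where v: "v \<in> span B" "dist v d < sqrt \<epsilon>"
    using B_dense \<epsilon> closure_approachable[of d "span B"] by (metis UNIV_I real_sqrt_gt_zero)
  obtain F c where F: "finite F" "F \<subseteq> B" and v_eq: "v = (\<Sum>e\<in>F. c e *\<^sub>R e)"
    using v(1) unfolding span_explicit by blast
  define P where "P = (\<Sum>e\<in>F. (d \<bullet> e) *\<^sub>R e)"
  have inner_P: "e' \<bullet> P = d \<bullet> e'" if "e' \<in> F" for e'
    unfolding P_def by (rule inner_sum_orthonormal[OF B_norm B_orth F that])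
  have "(d - P) \<bullet> e = 0" if "e \<in> F" for e
    using inner_P[OF that] by (simp add: inner_diff_left inner_commute[of P])
  then have residual_orth: "orthogonal (d - P) (\<Sum>e\<in>F. f e *\<^sub>R e)" for f
    by (simp add: orthogonal_def inner_sum_right)
  have "(norm (d - v))\<^sup>2 = (norm ((d - P) + (P - v)))\<^sup>2"
    by simp
  also have "\<dots> = (norm (d - P))\<^sup>2 + (norm (P - v))\<^sup>2"
  proof (rule norm_add_Pythagorean)
    show "orthogonal (d - P) (P - v)"
      using residual_orth[of "\<lambda>e. d \<bullet> e - c e"]
      by (simp add: P_def v_eq scaleR_diff_left sum_subtractf)
  qed
  finally have "(norm (d - P))\<^sup>2 \<le> (norm (d - v))\<^sup>2"
    by simp
  also have "\<dots> \<le> (sqrt \<epsilon>)\<^sup>2"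
    using v(2) by (intro power_mono) (auto simp: dist_norm norm_minus_commute)
  also have "\<dots> = \<epsilon>"
    using \<epsilon> by simp
  finally have residual_small: "(norm (d - P))\<^sup>2 \<le> \<epsilon>" .
  have "(norm P)\<^sup>2 = (\<Sum>e\<in>F. (d \<bullet> e) * (e \<bullet> P))"
    by (simp add: power2_norm_eq_inner P_def inner_sum_left)
  also have "\<dots> = (\<Sum>e\<in>F. (d \<bullet> e)\<^sup>2)"
    by (simp add: inner_P power2_eq_square)
  finally have norm_P: "(norm P)\<^sup>2 = (\<Sum>e\<in>F. (d \<bullet> e)\<^sup>2)" .
  have "(norm d)\<^sup>2 = (norm ((d - P) + P))\<^sup>2"
    by simp
  also have "\<dots> = (norm (d - P))\<^sup>2 + (norm P)\<^sup>2"
    using residual_orth[of "\<lambda>e. d \<bullet> e"] by (intro norm_add_Pythagorean) (simp add: P_def)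
  finally show ?thesis
    using F residual_small norm_P that by fastforce
qed

lemma power2_norm_le_infsum:
  fixes B :: "'g::real_inner set" and d :: 'g
  assumes B_norm: "\<And>e. e \<in> B \<Longrightarrow> norm e = 1" and B_orth: "pairwise orthogonal B"
    and B_dense: "closure (span B) = UNIV"
    and T: "T summable_on B" and T_ge: "\<And>e. e \<in> B \<Longrightarrow> (d \<bullet> e)\<^sup>2 \<le> T e"
  shows "(norm d)\<^sup>2 \<le> infsum T B"
proof (rule field_le_epsilon)
  fix \<epsilon> :: real assume "0 < \<epsilon>"
  then obtain F where F: "finite F" "F \<subseteq> B" and approx: "(norm d)\<^sup>2 \<le> (\<Sum>e\<in>F. (d \<bullet> e)\<^sup>2) + \<epsilon>"
    using power2_norm_approx_finite_Fourier_sum[OF B_norm B_orth B_dense] by blast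
  have "(\<Sum>e\<in>F. (d \<bullet> e)\<^sup>2) \<le> sum T F"
    using F T_ge by (intro sum_mono) auto
  also have "\<dots> \<le> infsum T B"
    using F T_ge by (intro finite_sum_le_infsum[OF T]) (auto intro: order_trans[OF zero_le_power2])
  finally show "(norm d)\<^sup>2 \<le> infsum T B + \<epsilon>"
    using approx by linarith
qed

lemma summable_on_dual_norm_diff_sq:
  assumes bdd1: "\<And>e. e \<in> B \<Longrightarrow> bounded (L1 e ` H_unit a b)"
    and bdd2: "\<And>e. e \<in> B \<Longrightarrow> bounded (L2 e ` H_unit a b)"
    and odd1: "\<And>e \<phi>. L1 e (\<lambda>t. - \<phi> t) = - L1 e \<phi>"
    and odd2: "\<And>e \<phi>. L2 e (\<lambda>t. - \<phi> t) = - L2 e \<phi>"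
    and sum1: "(\<lambda>e. (dual_norm a b (L1 e))\<^sup>2) summable_on B"
    and sum2: "(\<lambda>e. (dual_norm a b (L2 e))\<^sup>2) summable_on B"
  shows "(\<lambda>e. (dual_norm a b (\<lambda>\<phi>. L1 e \<phi> - L2 e \<phi>))\<^sup>2) summable_on B"
proof (rule summable_on_comparison_test)
  show "(\<lambda>e. 2 * (dual_norm a b (L1 e))\<^sup>2 + 2 * (dual_norm a b (L2 e))\<^sup>2) summable_on B"
    by (intro summable_on_add summable_on_cmult_right sum1 sum2)
  fix e assume e: "e \<in> B"
  let ?n1 = "dual_norm a b (L1 e)" and ?n2 = "dual_norm a b (L2 e)"
  have "0 \<le> dual_norm a b (\<lambda>\<phi>. L1 e \<phi> - L2 e \<phi>)"
    using bounded_minus_comp[OF bdd1[OF e] bdd2[OF e]]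
    by (rule dual_norm_nonneg) (simp add: odd1 odd2)
  moreover have "dual_norm a b (\<lambda>\<phi>. L1 e \<phi> - L2 e \<phi>) \<le> ?n1 + ?n2"
    by (intro dual_norm_diff_le bdd1 bdd2 odd2 e)
  ultimately have "(dual_norm a b (\<lambda>\<phi>. L1 e \<phi> - L2 e \<phi>))\<^sup>2 \<le> (?n1 + ?n2)\<^sup>2"
    by (intro power_mono) auto
  also have "\<dots> \<le> 2 * ?n1\<^sup>2 + 2 * ?n2\<^sup>2"
    using zero_le_power2[of "?n1 - ?n2"] by (simp add: power2_eq_square algebra_simps)
  finally show "(dual_norm a b (\<lambda>\<phi>. L1 e \<phi> - L2 e \<phi>))\<^sup>2 \<le> 2 * ?n1\<^sup>2 + 2 * ?n2\<^sup>2" .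
qed (simp)

lemma bounded_integral_dirac_comb_H_unit:
  assumes ab: "0 \<le> a" "0 \<le> b" and r_in: "\<And>j. r j \<in> Ival a b"
    and x_nonneg: "\<And>j. 0 \<le> x $ j"
  shows "bounded ((\<lambda>\<phi>. LINT t|dirac_comb a b r x. \<phi> t * h t) ` H_unit a b)"
proof -
  have "\<bar>LINT t|dirac_comb a b r x. \<phi> t * h t\<bar>
      \<le> (\<Sum>j\<in>UNIV. x $ j * ((a + b + 3) / 2 * \<bar>h (r j)\<bar>))" if \<phi>: "\<phi> \<in> H_unit a b" for \<phi>
  proof -
    have "\<bar>LINT t|dirac_comb a b r x. \<phi> t * h t\<bar> \<le> (\<Sum>j\<in>UNIV. x $ j * \<bar>\<phi> (r j) * h (r j)\<bar>)"
      by (rule abs_integral_dirac_comb_le[OF r_in x_nonneg])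
    also have "\<dots> \<le> (\<Sum>j\<in>UNIV. x $ j * ((a + b + 3) / 2 * \<bar>h (r j)\<bar>))"
    proof (intro sum_mono mult_left_mono x_nonneg)
      fix j
      show "\<bar>\<phi> (r j) * h (r j)\<bar> \<le> (a + b + 3) / 2 * \<bar>h (r j)\<bar>"
        unfolding abs_mult by (intro mult_right_mono H_unit_abs_le[OF \<phi> ab r_in]) simp
    qed
    finally show ?thesis .
  qed
  then show ?thesis
    unfolding bounded_real by blast
qed

lemma sigma_fun_uminus: "sigma_fun g M h (\<lambda>t. - \<phi> t) = - sigma_fun g M h \<phi>"
  by (simp add: sigma_fun_def)

lemma sigma_fun_dirac_comb_test_function:
  assumes r_in: "\<And>j. r j \<in> Ival a b" and x_nonneg: "\<And>j. 0 \<le> x $ j"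
    and g_int: "integrable (dirac_comb a b r x) (\<lambda>t. g (dirac_comb a b r x) t \<bullet> h)"
    and \<phi>_cont: "continuous_on UNIV \<phi>" and \<phi>_vanish: "\<And>j. j \<noteq> i \<Longrightarrow> \<phi> (r j) = 0"
  shows "sigma_fun g (dirac_comb a b r x) h \<phi>
    = x $ i * \<phi> (r i) * (g (dirac_comb a b r x) (r i) \<bullet> h)"
proof -
  let ?M = "dirac_comb a b r x"
  have "(\<lambda>t. g ?M t \<bullet> h) \<in> borel_measurable (restrict_space borel (Ival a b))"
    using borel_measurable_integrable[OF g_int]
    by (simp add: measurable_cong_sets[OF sets_dirac_comb refl])
  moreover have "\<phi> \<in> borel_measurable (restrict_space borel (Ival a b))"
    using borel_measurable_continuous_onI[OF \<phi>_cont] by (rule measurable_restrict_space1)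
  ultimately have "sigma_fun g ?M h \<phi> = (\<Sum>j\<in>UNIV. x $ j * (\<phi> (r j) * (g ?M (r j) \<bullet> h)))"
    unfolding sigma_fun_def by (intro integral_dirac_comb[OF r_in x_nonneg] borel_measurable_times)
  also have "\<dots> = x $ i * \<phi> (r i) * (g ?M (r i) \<bullet> h)"
    using \<phi>_vanish by (subst sum.remove[of _ i]) auto
  finally show ?thesis .
qed

lemma norm_le_HS_dist_dirac_comb:
  fixes B :: "'g::real_inner set" and g :: "real measure \<Rightarrow> real \<Rightarrow> 'g"
  assumes ab: "0 \<le> a" "0 \<le> b" and r_in: "\<And>j. r j \<in> Ival a b"
    and B_norm: "\<And>e. e \<in> B \<Longrightarrow> norm e = 1" and B_orth: "pairwise orthogonal B"
    and B_dense: "closure (span B) = UNIV"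
    and g_meas: "\<And>M h. M \<in> prob_measures a b \<Longrightarrow> integrable M (\<lambda>r. g M r \<bullet> h)"
    and sigma_HS: "\<And>M. M \<in> prob_measures a b \<Longrightarrow>
        (\<lambda>e. (dual_norm a b (sigma_fun g M e))\<^sup>2) summable_on B"
    and x: "x \<in> simplex_Q" and y: "y \<in> simplex_Q"
    and \<phi>: "\<phi> \<in> H_unit a b" and \<phi>_cont: "continuous_on UNIV \<phi>"
    and \<phi>_vanish: "\<And>j. j \<noteq> i \<Longrightarrow> \<phi> (r j) = 0"
  defines "Mx \<equiv> dirac_comb a b r x" and "My \<equiv> dirac_comb a b r y"
  shows "norm (\<phi> (r i) *\<^sub>R (x $ i *\<^sub>R g Mx (r i) - y $ i *\<^sub>R g My (r i))) \<le> HS_dist a b B g Mx My"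
proof -
  let ?d = "\<phi> (r i) *\<^sub>R (x $ i *\<^sub>R g Mx (r i) - y $ i *\<^sub>R g My (r i))"
  let ?L = "\<lambda>e \<psi>. sigma_fun g Mx e \<psi> - sigma_fun g My e \<psi>"
  have x_nonneg: "\<And>j. 0 \<le> x $ j" and y_nonneg: "\<And>j. 0 \<le> y $ j"
    using x y by (auto simp: simplex_Q_def)
  have prob: "Mx \<in> prob_measures a b" "My \<in> prob_measures a b"
    unfolding Mx_def My_def using r_in x y by (auto intro: dirac_comb_in_prob_measures)
  have bdd: "bounded (sigma_fun g Mx e ` H_unit a b)" "bounded (sigma_fun g My e ` H_unit a b)" for e
    unfolding Mx_def My_def sigma_fun_def
    by (intro bounded_integral_dirac_comb_H_unit ab r_in x_nonneg y_nonneg)+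
  have "sigma_fun g Mx e \<phi> = x $ i * \<phi> (r i) * (g Mx (r i) \<bullet> e)" for e
    using sigma_fun_dirac_comb_test_function[where r=r and g=g and x=x,
        OF r_in x_nonneg g_meas[OF prob(1), unfolded Mx_def] \<phi>_cont \<phi>_vanish]
    by (simp add: Mx_def)
  moreover have "sigma_fun g My e \<phi> = y $ i * \<phi> (r i) * (g My (r i) \<bullet> e)" for e
    using sigma_fun_dirac_comb_test_function[where r=r and g=g and x=y,
        OF r_in y_nonneg g_meas[OF prob(2), unfolded My_def] \<phi>_cont \<phi>_vanish]
    by (simp add: My_def)
  ultimately have L_\<phi>: "?L e \<phi> = ?d \<bullet> e" for e
    by (simp add: inner_diff_left algebra_simps)
  have "\<bar>?d \<bullet> e\<bar> \<le> dual_norm a b (?L e)" for e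
    unfolding L_\<phi>[symmetric]
    by (intro abs_le_dual_norm[OF bounded_minus_comp[OF bdd] _ \<phi>]) (simp add: sigma_fun_uminus)
  then have "(?d \<bullet> e)\<^sup>2 \<le> (dual_norm a b (?L e))\<^sup>2" for e
    using power_mono[OF _ abs_ge_zero, of "?d \<bullet> e" _ 2] by simp
  moreover have "(\<lambda>e. (dual_norm a b (?L e))\<^sup>2) summable_on B"
    by (rule summable_on_dual_norm_diff_sq[OF bdd sigma_fun_uminus sigma_fun_uminus
          sigma_HS[OF prob(1)] sigma_HS[OF prob(2)]])
  ultimately have "(norm ?d)\<^sup>2 \<le> (\<Sum>\<^sub>\<infinity>e\<in>B. (dual_norm a b (?L e))\<^sup>2)"
    by (intro power2_norm_le_infsum[OF B_norm B_orth B_dense])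
  then show ?thesis
    unfolding HS_dist_def by (rule real_le_rsqrt)
qed

lemma meas_dist_dirac_comb_le:
  assumes ab: "0 \<le> a" "0 \<le> b" and r_in: "\<And>j. r j \<in> Ival a b"
    and x_nonneg: "\<And>j. 0 \<le> x $ j" and y_nonneg: "\<And>j. 0 \<le> y $ j"
  shows "meas_dist a b (dirac_comb a b r x) (dirac_comb a b r y)
    \<le> (a + b + 3) / 2 * (\<Sum>j\<in>UNIV. \<bar>x $ j - y $ j\<bar>)"
  unfolding meas_dist_def
proof (rule dual_norm_least)
  fix \<phi> assume "\<phi> \<in> H_unit a b"
  then show "(LINT t|dirac_comb a b r x. \<phi> t) - (LINT t|dirac_comb a b r y. \<phi> t)
      \<le> (a + b + 3) / 2 * (\<Sum>j\<in>UNIV. \<bar>x $ j - y $ j\<bar>)"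
    by (intro integral_dirac_comb_diff_le[OF r_in x_nonneg y_nonneg] H_unit_abs_le ab r_in)
qed

lemma sum_abs_diff_le_card_dist:
  fixes x y :: "real^'n::finite"
  shows "(\<Sum>j\<in>UNIV. \<bar>x $ j - y $ j\<bar>) \<le> real CARD('n) * dist x y"
proof -
  have "(\<Sum>j\<in>UNIV. \<bar>x $ j - y $ j\<bar>) \<le> (\<Sum>j\<in>(UNIV::'n set). dist x y)"
    using component_le_norm_cart[of "x - y"] by (intro sum_mono) (simp add: dist_norm)
  then show ?thesis by simp
qed

theorem proposition3p10:
  fixes a b K :: real
    and r :: "'n::{finite,linorder} \<Rightarrow> real"
    and B :: "'g::{real_inner,complete_space} set"
    and g :: "real measure \<Rightarrow> real \<Rightarrow> 'g"
  assumes "0 \<le> a" and "0 \<le> b"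
    and r_mono: "strict_mono r" and r_in: "\<And>j. r j \<in> Ival a b"
    and B_countable: "countable B"
    and B_norm: "\<And>e. e \<in> B \<Longrightarrow> norm e = 1"
    and B_orth: "pairwise orthogonal B"
    and B_dense: "closure (span B) = UNIV"
    and g_meas: "\<And>M h. M \<in> prob_measures a b \<Longrightarrow> integrable M (\<lambda>r. g M r \<bullet> h)"
    and sigma_HS: "\<And>M. M \<in> prob_measures a b \<Longrightarrow>
        (\<lambda>e. (dual_norm a b (sigma_fun g M e))\<^sup>2) summable_on B"
    and "K > 0"
    and sigma_lip: "\<And>M N. M \<in> prob_measures a b \<Longrightarrow> N \<in> prob_measures a b \<Longrightarrow>
        HS_dist a b B g M N \<le> K * meas_dist a b M N"
  shows "\<forall>i. \<exists>L. L-lipschitz_on simplex_Q (\<lambda>x. x $ i *\<^sub>R g (dirac_comb a b r x) (r i))"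
proof
  fix i
  have ab: "0 \<le> a" "0 \<le> b" by fact+
  obtain \<phi> where \<phi>: "\<phi> \<in> H_unit a b" "continuous_on UNIV \<phi>" "\<phi> (r i) \<noteq> 0"
    and \<phi>_vanish: "\<And>j. j \<noteq> i \<Longrightarrow> \<phi> (r j) = 0"
    using H_unit_test_function[OF ab strict_mono_imp_inj_on[OF r_mono] r_in] by blast
  let ?C = "K * ((a + b + 3) / 2) * real CARD('n)"
  show "\<exists>L. L-lipschitz_on simplex_Q (\<lambda>x. x $ i *\<^sub>R g (dirac_comb a b r x) (r i))"
  proof (intro exI lipschitz_onI)
    fix x y :: "real^'n::{finite,linorder}" assume x: "x \<in> simplex_Q" and y: "y \<in> simplex_Q"
    let ?Mx = "dirac_comb a b r x" and ?My = "dirac_comb a b r y"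
    have x_nonneg: "\<And>j. 0 \<le> x $ j" and y_nonneg: "\<And>j. 0 \<le> y $ j"
      using x y by (auto simp: simplex_Q_def)
    have "\<bar>\<phi> (r i)\<bar> * dist (x $ i *\<^sub>R g ?Mx (r i)) (y $ i *\<^sub>R g ?My (r i))
        \<le> HS_dist a b B g ?Mx ?My"
      using norm_le_HS_dist_dirac_comb[OF ab r_in B_norm B_orth B_dense g_meas sigma_HS x y \<phi>(1,2)
          \<phi>_vanish] by (simp add: dist_norm)
    also have "\<dots> \<le> K * meas_dist a b ?Mx ?My"
      using r_in x y by (intro sigma_lip dirac_comb_in_prob_measures)
    also have "\<dots> \<le> K * ((a + b + 3) / 2 * (\<Sum>j\<in>UNIV. \<bar>x $ j - y $ j\<bar>))"
      using \<open>K > 0\<close> meas_dist_dirac_comb_le[OF ab r_in x_nonneg y_nonneg] by simp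
    also have "\<dots> \<le> ?C * dist x y"
      using \<open>K > 0\<close> ab sum_abs_diff_le_card_dist[of x y] by (simp add: mult_left_mono)
    finally show "dist (x $ i *\<^sub>R g ?Mx (r i)) (y $ i *\<^sub>R g ?My (r i))
        \<le> ?C / \<bar>\<phi> (r i)\<bar> * dist x y"
      using \<phi>(3) by (simp add: field_simps)
  qed (use \<open>K > 0\<close> ab in simp)
qed

end
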